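(* Let $\Gamma$ be a finitely generated infinite simple group, $S$ a finite generating set of $\Gamma$ (not containing the identity), and suppose $G=\mathrm{Cay}(\Gamma,S)$ is a graphical regular representation of $\Gamma$. Then every periodic vertex-coloring of $G$ is trivial. Moreover, if $S$ contains an element of order $2$, then $G$ does not have a periodic orientation.
   Context: The Cayley graph $\mathrm{Cay}(\Gamma,S)$ has vertex set $\Gamma$, with $g,h$ adjacent iff $hg^{-1}\in S\cup S^{-1}$; $\Gamma$ acts on it by right multiplication $h\mapsto hg$. It is a graphical regular representation of $\Gamma$ if these right multiplications are all of its automorphisms, i.e. $\mathrm{Aut}(G)=\Gamma$. A vertex-coloring is trivial if within each connected component all vertices get the same color. A vertex-coloring (resp. orientation) of $G$ is periodic if the subgroup of automorphisms of $G$ preserving the colors of vertices (resp. the orientation of every edge) has finitely many orbits on $V(G)$. *)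

theory Defs
  imports "HOL-Algebra.Algebra" "HOL-Library.FuncSet"
begin

text \<open>Simplicity for possibly infinite groups (the library locale simple_group
  requires order G > 1, which fails for infinite groups since order = card).\<close>
definition simple_grp :: "('a, 'b) monoid_scheme \<Rightarrow> bool" where
  "simple_grp G \<longleftrightarrow> group G \<and> carrier G \<noteq> {\<one>\<^bsub>G\<^esub>} \<and>
     (\<forall>H. H \<lhd> G \<longrightarrow> H = {\<one>\<^bsub>G\<^esub>} \<or> H = carrier G)"

definition cay_adj :: "('a, 'b) monoid_scheme \<Rightarrow> 'a set \<Rightarrow> 'a \<Rightarrow> 'a \<Rightarrow> bool" where
  "cay_adj G S g h \<longleftrightarrow> g \<in> carrier G \<and> h \<in> carrier G \<and>
     (h \<otimes>\<^bsub>G\<^esub> inv\<^bsub>G\<^esub> g \<in> S \<or> h \<otimes>\<^bsub>G\<^esub> inv\<^bsub>G\<^esub> g \<in> (\<lambda>s. inv\<^bsub>G\<^esub> s) ` S)"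

definition cay_auts :: "('a, 'b) monoid_scheme \<Rightarrow> 'a set \<Rightarrow> ('a \<Rightarrow> 'a) set" where
  "cay_auts G S = {\<phi> \<in> extensional (carrier G).
     bij_betw \<phi> (carrier G) (carrier G) \<and>
     (\<forall>g\<in>carrier G. \<forall>h\<in>carrier G. cay_adj G S g h \<longleftrightarrow> cay_adj G S (\<phi> g) (\<phi> h))}"

definition right_mults :: "('a, 'b) monoid_scheme \<Rightarrow> ('a \<Rightarrow> 'a) set" where
  "right_mults G = {restrict (\<lambda>h. h \<otimes>\<^bsub>G\<^esub> g) (carrier G) | g. g \<in> carrier G}"

definition is_GRR :: "('a, 'b) monoid_scheme \<Rightarrow> 'a set \<Rightarrow> bool" where
  "is_GRR G S \<longleftrightarrow> cay_auts G S = right_mults G"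

definition orbit_of :: "('a \<Rightarrow> 'a) set \<Rightarrow> 'a \<Rightarrow> 'a set" where
  "orbit_of A v = {\<phi> v | \<phi>. \<phi> \<in> A}"

definition finitely_many_orbits :: "('a \<Rightarrow> 'a) set \<Rightarrow> 'a set \<Rightarrow> bool" where
  "finitely_many_orbits A V \<longleftrightarrow> finite {orbit_of A v | v. v \<in> V}"

definition color_preserving_auts ::
  "('a, 'b) monoid_scheme \<Rightarrow> 'a set \<Rightarrow> ('a \<Rightarrow> 'c) \<Rightarrow> ('a \<Rightarrow> 'a) set" where
  "color_preserving_auts G S c = {\<phi> \<in> cay_auts G S. \<forall>v\<in>carrier G. c (\<phi> v) = c v}"

definition periodic_coloring :: "('a, 'b) monoid_scheme \<Rightarrow> 'a set \<Rightarrow> ('a \<Rightarrow> 'c) \<Rightarrow> bool" where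
  "periodic_coloring G S c \<longleftrightarrow> finitely_many_orbits (color_preserving_auts G S c) (carrier G)"

definition trivial_coloring :: "('a, 'b) monoid_scheme \<Rightarrow> 'a set \<Rightarrow> ('a \<Rightarrow> 'c) \<Rightarrow> bool" where
  "trivial_coloring G S c \<longleftrightarrow>
     (\<forall>u\<in>carrier G. \<forall>v\<in>carrier G. (cay_adj G S)\<^sup>*\<^sup>* u v \<longrightarrow> c u = c v)"

text \<open>An orientation: D u v means the edge {u,v} is directed from u to v;
  every edge gets exactly one direction, and D lives on edges only.\<close>
definition is_orientation :: "('a, 'b) monoid_scheme \<Rightarrow> 'a set \<Rightarrow> ('a \<Rightarrow> 'a \<Rightarrow> bool) \<Rightarrow> bool" where
  "is_orientation G S D \<longleftrightarrow> (\<forall>u v. D u v \<longrightarrow> cay_adj G S u v) \<and>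
     (\<forall>u v. cay_adj G S u v \<longrightarrow> (D u v \<longleftrightarrow> \<not> D v u))"

definition orientation_preserving_auts ::
  "('a, 'b) monoid_scheme \<Rightarrow> 'a set \<Rightarrow> ('a \<Rightarrow> 'a \<Rightarrow> bool) \<Rightarrow> ('a \<Rightarrow> 'a) set" where
  "orientation_preserving_auts G S D =
     {\<phi> \<in> cay_auts G S. \<forall>u v. D u v \<longrightarrow> D (\<phi> u) (\<phi> v)}"

definition periodic_orientation :: "('a, 'b) monoid_scheme \<Rightarrow> 'a set \<Rightarrow> ('a \<Rightarrow> 'a \<Rightarrow> bool) \<Rightarrow> bool" where
  "periodic_orientation G S D \<longleftrightarrow> is_orientation G S D \<and>
     finitely_many_orbits (orientation_preserving_auts G S D) (carrier G)"

end

theory Submission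
  imports Defs
begin

text \<open>Because every automorphism of the Cayley graph is a right multiplication, the
  automorphisms preserving a colouring or an orientation are the right multiplications by
  the elements of a set \<open>H\<close> containing \<open>\<one>\<close>, and their orbits are the translates \<open>v <# H\<close>.
  Periodicity therefore says that \<open>H\<close> has only finitely many translates. Left multiplication
  permutes these translates; the kernel of this action is a normal subgroup contained in \<open>H\<close>,
  and it cannot be trivial since the infinite group would then embed into the finite group
  of permutations of the translates. By simplicity the kernel is the whole group, so \<open>H\<close> is
  too: every colouring preserved by all right multiplications is constant, and no
  orientation is preserved by right multiplication with an involution \<open>s\<close>, which swaps the
  endpoints of the edge between \<open>\<one>\<close> and \<open>s\<close>.\<close>

definition translation_kernel :: "('a, 'b) monoid_scheme \<Rightarrow> 'a set \<Rightarrow> 'a set" where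
  "translation_kernel G H =
     {g \<in> carrier G. \<forall>v\<in>carrier G. (g \<otimes>\<^bsub>G\<^esub> v) <#\<^bsub>G\<^esub> H = v <#\<^bsub>G\<^esub> H}"

definition right_mult :: "('a, 'b) monoid_scheme \<Rightarrow> 'a \<Rightarrow> 'a \<Rightarrow> 'a" where
  "right_mult G g = restrict (\<lambda>h. h \<otimes>\<^bsub>G\<^esub> g) (carrier G)"

context group
begin

lemma translation_kernel_subgroup:
  assumes "H \<subseteq> carrier G"
  shows "subgroup (translation_kernel G H) G"
proof (rule subgroupI)
  show "translation_kernel G H \<subseteq> carrier G"
    unfolding translation_kernel_def by auto
  show "translation_kernel G H \<noteq> {}"
    unfolding translation_kernel_def by (auto intro!: exI[of _ \<one>])
next
  fix a assume a: "a \<in> translation_kernel G H"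
  hence ac: "a \<in> carrier G" unfolding translation_kernel_def by auto
  have "(inv a \<otimes> v) <# H = v <# H" if v: "v \<in> carrier G" for v
  proof -
    have "v <# H = (a \<otimes> (inv a \<otimes> v)) <# H" using ac v by (simp add: m_assoc[symmetric])
    also have "\<dots> = (inv a \<otimes> v) <# H" using a v ac unfolding translation_kernel_def by auto
    finally show ?thesis by simp
  qed
  thus "inv a \<in> translation_kernel G H" using ac unfolding translation_kernel_def by auto
next
  fix a b assume a: "a \<in> translation_kernel G H" and b: "b \<in> translation_kernel G H"
  hence ac: "a \<in> carrier G" and bc: "b \<in> carrier G" unfolding translation_kernel_def by auto
  have "(a \<otimes> b \<otimes> v) <# H = v <# H" if v: "v \<in> carrier G" for v
  proof -
    have "(a \<otimes> b \<otimes> v) <# H = (a \<otimes> (b \<otimes> v)) <# H" using ac bc v by (simp add: m_assoc)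
    also have "\<dots> = (b \<otimes> v) <# H" using a v bc unfolding translation_kernel_def by auto
    also have "\<dots> = v <# H" using b v unfolding translation_kernel_def by auto
    finally show ?thesis .
  qed
  thus "a \<otimes> b \<in> translation_kernel G H" using ac bc unfolding translation_kernel_def by auto
qed

lemma translation_kernel_normal:
  assumes H: "H \<subseteq> carrier G"
  shows "translation_kernel G H \<lhd> G"
  unfolding normal_inv_iff
proof (intro conjI translation_kernel_subgroup[OF H] ballI)
  fix x h assume x: "x \<in> carrier G" and h: "h \<in> translation_kernel G H"
  hence hc: "h \<in> carrier G" unfolding translation_kernel_def by auto
  have "(x \<otimes> h \<otimes> inv x \<otimes> v) <# H = v <# H" if v: "v \<in> carrier G" for v
  proof -
    have "(x \<otimes> h \<otimes> inv x \<otimes> v) <# H = x <# ((h \<otimes> (inv x \<otimes> v)) <# H)"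
      using x hc v H by (simp add: lcos_m_assoc m_assoc)
    also have "\<dots> = x <# ((inv x \<otimes> v) <# H)"
      using h x v unfolding translation_kernel_def by auto
    also have "\<dots> = v <# H" using x v H by (simp add: lcos_m_assoc m_assoc[symmetric])
    finally show ?thesis .
  qed
  thus "x \<otimes> h \<otimes> inv x \<in> translation_kernel G H"
    using x hc unfolding translation_kernel_def by auto
qed

lemma translation_kernel_subset:
  assumes "H \<subseteq> carrier G" and "\<one> \<in> H"
  shows "translation_kernel G H \<subseteq> H"
proof
  fix g assume "g \<in> translation_kernel G H"
  hence g: "g \<in> carrier G" and fixes_translates: "\<forall>v\<in>carrier G. (g \<otimes> v) <# H = v <# H"
    unfolding translation_kernel_def by auto
  have "g <# H = H"
    using fixes_translates[rule_format, OF one_closed] g assms(1) by (simp add: lcos_mult_one)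
  thus "g \<in> H" using assms(2) g unfolding l_coset_def by (metis r_one UN_iff singletonI)
qed

lemma finite_carrier_if_translation_kernel_trivial:
  assumes H: "H \<subseteq> carrier G"
    and fin: "finite {v <# H | v. v \<in> carrier G}"
    and triv: "translation_kernel G H = {\<one>}"
  shows "finite (carrier G)"
proof -
  define Ts where "Ts = {v <# H | v. v \<in> carrier G}"
  define act where "act = (\<lambda>g. restrict (l_coset G g) Ts)"
  have "inj_on act (carrier G)"
  proof (rule inj_onI)
    fix g h assume g: "g \<in> carrier G" and h: "h \<in> carrier G" and eq: "act g = act h"
    have "(inv h \<otimes> g \<otimes> v) <# H = v <# H" if v: "v \<in> carrier G" for v
    proof -
      have "v <# H \<in> Ts" using v unfolding Ts_def by auto
      hence "g <# (v <# H) = h <# (v <# H)" using eq unfolding act_def by (metis restrict_apply')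
      hence "inv h <# ((g \<otimes> v) <# H) = inv h <# ((h \<otimes> v) <# H)"
        using g h v H by (simp add: lcos_m_assoc)
      thus ?thesis using g h v H by (simp add: lcos_m_assoc m_assoc[symmetric])
    qed
    hence "inv h \<otimes> g = \<one>" using g h triv unfolding translation_kernel_def by auto
    thus "g = h" using g h by (metis inv_equality inv_inv inv_closed)
  qed
  moreover have "act ` carrier G \<subseteq> Ts \<rightarrow>\<^sub>E Ts"
  proof
    fix f assume "f \<in> act ` carrier G"
    then obtain g where g: "g \<in> carrier G" and f: "f = act g" by auto
    have "g <# T \<in> Ts" if "T \<in> Ts" for T
      using that g H unfolding Ts_def by (auto simp: lcos_m_assoc)
    thus "f \<in> Ts \<rightarrow>\<^sub>E Ts" unfolding f act_def by auto
  qed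
  moreover have "finite (Ts \<rightarrow>\<^sub>E Ts)" using fin unfolding Ts_def by (simp add: finite_PiE)
  ultimately show ?thesis by (meson finite_imageD finite_subset)
qed

lemma finitely_many_translates_eq_carrier:
  assumes "simple_grp G" and "infinite (carrier G)"
    and "H \<subseteq> carrier G" and "\<one> \<in> H"
    and "finite {v <# H | v. v \<in> carrier G}"
  shows "H = carrier G"
proof -
  have "translation_kernel G H = {\<one>} \<or> translation_kernel G H = carrier G"
    using assms(1) translation_kernel_normal[OF assms(3)] unfolding simple_grp_def by auto
  hence "translation_kernel G H = carrier G"
    using assms(2) finite_carrier_if_translation_kernel_trivial[OF assms(3,5)] by blast
  thus ?thesis using translation_kernel_subset[OF assms(3,4)] assms(3) by blast
qed

lemma orbit_of_right_mult:
  assumes "H \<subseteq> carrier G" and "v \<in> carrier G"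
  shows "orbit_of (right_mult G ` H) v = v <# H"
proof
  show "orbit_of (right_mult G ` H) v \<subseteq> v <# H"
    using assms unfolding orbit_of_def right_mult_def l_coset_def by auto
  show "v <# H \<subseteq> orbit_of (right_mult G ` H) v"
  proof
    fix x assume "x \<in> v <# H"
    then obtain h where "h \<in> H" "x = v \<otimes> h" unfolding l_coset_def by auto
    thus "x \<in> orbit_of (right_mult G ` H) v"
      using assms(2) unfolding orbit_of_def
      by (intro CollectI exI[of _ "right_mult G h"]) (auto simp: right_mult_def)
  qed
qed

lemma finitely_many_orbits_right_mults_imp_all:
  assumes "simple_grp G" and "infinite (carrier G)"
    and periodic: "finitely_many_orbits {\<phi> \<in> right_mults G. P \<phi>} (carrier G)"
    and "P (right_mult G \<one>)"
    and "g \<in> carrier G"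
  shows "P (right_mult G g)"
proof -
  define H where "H = {g \<in> carrier G. P (right_mult G g)}"
  have H: "H \<subseteq> carrier G" unfolding H_def by auto
  have "{\<phi> \<in> right_mults G. P \<phi>} = right_mult G ` H"
    unfolding right_mults_def right_mult_def H_def by auto
  hence "{orbit_of {\<phi> \<in> right_mults G. P \<phi>} v | v. v \<in> carrier G} = {v <# H | v. v \<in> carrier G}"
    using orbit_of_right_mult[OF H] by (simp add: Setcompr_eq_image)
  hence "H = carrier G"
    using finitely_many_translates_eq_carrier[OF assms(1,2) H] periodic assms(4)
    unfolding finitely_many_orbits_def H_def by auto
  thus ?thesis using assms(5) unfolding H_def by auto
qed

lemma periodic_coloring_constant:
  assumes "simple_grp G" and "infinite (carrier G)" and "is_GRR G S"
    and "periodic_coloring G S c" and "v \<in> carrier G"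
  shows "c v = c \<one>"
proof -
  let ?P = "\<lambda>\<phi>. \<forall>u\<in>carrier G. c (\<phi> u) = c u"
  have "?P (right_mult G v)"
  proof (rule finitely_many_orbits_right_mults_imp_all[OF assms(1,2)])
    show "finitely_many_orbits {\<phi> \<in> right_mults G. ?P \<phi>} (carrier G)"
      using assms(3,4)
      unfolding periodic_coloring_def color_preserving_auts_def is_GRR_def by simp
  qed (auto simp: right_mult_def assms(5))
  thus ?thesis using assms(5) unfolding right_mult_def by (metis l_one one_closed restrict_apply')
qed

lemma no_periodic_orientation_with_involution:
  assumes "simple_grp G" and "infinite (carrier G)" and "is_GRR G S"
    and "periodic_orientation G S D" and "s \<in> S" and "s \<in> carrier G" and "s \<otimes> s = \<one>"
  shows False
proof -
  let ?P = "\<lambda>\<phi>. \<forall>u v. D u v \<longrightarrow> D (\<phi> u) (\<phi> v)"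
  have orientation: "is_orientation G S D" using assms(4) unfolding periodic_orientation_def by simp
  hence D_carrier: "u \<in> carrier G \<and> v \<in> carrier G" if "D u v" for u v
    using that unfolding is_orientation_def cay_adj_def by blast
  have "?P (right_mult G s)"
  proof (rule finitely_many_orbits_right_mults_imp_all[OF assms(1,2) _ _ assms(6)])
    show "finitely_many_orbits {\<phi> \<in> right_mults G. ?P \<phi>} (carrier G)"
      using assms(3,4)
      unfolding periodic_orientation_def orientation_preserving_auts_def is_GRR_def by simp
    show "?P (right_mult G \<one>)" using D_carrier unfolding right_mult_def by simp
  qed
  hence swap: "D \<one> s \<longleftrightarrow> D s \<one>" using assms(6,7) unfolding right_mult_def by force
  have "cay_adj G S \<one> s" unfolding cay_adj_def using assms(5,6) by simp
  hence "D \<one> s \<longleftrightarrow> \<not> D s \<one>" using orientation unfolding is_orientation_def by blast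
  with swap show False by blast
qed

end

theorem lemma3p2:
  fixes G :: "('a, 'b) monoid_scheme" and S :: "'a set"
  assumes "group G" and "simple_grp G" and "infinite (carrier G)"
    and "finite S" and "S \<subseteq> carrier G" and "\<one>\<^bsub>G\<^esub> \<notin> S"
    and "generate G S = carrier G"
    and "is_GRR G S"
  shows "(\<forall>c :: 'a \<Rightarrow> 'c. periodic_coloring G S c \<longrightarrow> trivial_coloring G S c) \<and>
         ((\<exists>s\<in>S. group.ord G s = 2) \<longrightarrow> (\<nexists>D. periodic_orientation G S D))"
proof (intro conjI allI impI)
  interpret group G by fact
  fix c :: "'a \<Rightarrow> 'c"
  assume "periodic_coloring G S c"
  thus "trivial_coloring G S c"
    using periodic_coloring_constant[OF assms(2,3,8)] unfolding trivial_coloring_def by metis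
next
  interpret group G by fact
  assume "\<exists>s\<in>S. ord s = 2"
  then obtain s where s: "s \<in> S" "s \<in> carrier G" and "ord s = 2" using assms(5) by blast
  hence "s \<otimes>\<^bsub>G\<^esub> s = \<one>\<^bsub>G\<^esub>" using pow_ord_eq_1[of s] by (simp add: numeral_2_eq_2)
  thus "\<nexists>D. periodic_orientation G S D"
    using no_periodic_orientation_with_involution[OF assms(2,3,8) _ s] by blast
qed

end
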